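(* Let $\mathbf{H}\in\mathcal{S}^{12}$, $\mathbf{H}\succ0$, and let $(\bar{\mathbf{R}},\bar{\mathbf{t}})\in\mathrm{SO}(3)\times\mathbb{R}^3$. Let $\mathbf{P}_r=[\mathbf{I}_9\ \mathbf{0}_{9\times3}]$ and $\mathbf{H}_r=(\mathbf{P}_r\mathbf{H}^{-1}\mathbf{P}_r^\mathsf{T})^{-1}$. Let $\mathbf{P}_\theta\in\mathbb{R}^{3\times9}$ be the matrix such that for every $\mathbf{M}\in\mathbb{R}^{3\times3}$, $\mathbf{P}_\theta\mathrm{vec}(\mathbf{M})=[M_{32}-M_{23},\ M_{13}-M_{31},\ M_{21}-M_{12}]^\mathsf{T}$, and define $$\mathbf{H}_\theta=4\left(\mathbf{P}_\theta\left[(\bar{\mathbf{R}}^\mathsf{T}\otimes\mathbf{I}_3)^\mathsf{T}\mathbf{H}_r(\bar{\mathbf{R}}^\mathsf{T}\otimes\mathbf{I}_3)\right]^{-1}\mathbf{P}_\theta^\mathsf{T}\right)^{-1}.$$ Suppose $(\mathbf{R},\mathbf{t})\in\mathrm{SO}(3)\times\mathbb{R}^3$ satisfies $$\begin{bmatrix}\mathrm{vec}(\mathbf{R}-\bar{\mathbf{R}})\\ \mathbf{t}-\bar{\mathbf{t}}\end{bmatrix}^\mathsf{T}\mathbf{H}\begin{bmatrix}\mathrm{vec}(\mathbf{R}-\bar{\mathbf{R}})\\ \mathbf{t}-\bar{\mathbf{t}}\end{bmatrix}\le1,$$ and write $\mathbf{R}=\mathbf{R}_{\boldsymbol{\omega}}(\theta)\bar{\mathbf{R}}$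 with axis $\boldsymbol{\omega}\in\mathbb{S}^2$ and angle $\theta$. If $\theta\le90^\circ$, then $$(\boldsymbol{\omega}\sin\theta)^\mathsf{T}\mathbf{H}_\theta(\boldsymbol{\omega}\sin\theta)\le1.$$ Moreover, for $\boldsymbol{\xi}=\boldsymbol{\omega}\sin\theta$ one has $\boldsymbol{\omega}=\boldsymbol{\xi}/\|\boldsymbol{\xi}\|_2$ and $\sin\theta=\|\boldsymbol{\xi}\|_2$.
   Context: $\mathrm{vec}$ stacks columns; $\otimes$ is the Kronecker product; $\mathbb{S}^2$ is the unit sphere in $\mathbb{R}^3$. $\mathbf{R}_{\boldsymbol{\omega}}(\theta)$ is the rotation by angle $\theta$ about axis $\boldsymbol{\omega}$ given by Rodrigues' formula $\mathbf{R}_{\boldsymbol{\omega}}(\theta)=\mathbf{I}_3+\hat{\boldsymbol{\omega}}\sin\theta+\hat{\boldsymbol{\omega}}^2(1-\cos\theta)$, where $\hat{\boldsymbol{\omega}}$ is the skew-symmetric cross-product matrix with rows $(0,-\omega_3,\omega_2)$, $(\omega_3,0,-\omega_1)$, $(-\omega_2,\omega_1,0)$. *)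

theory Defs
  imports "HOL-Analysis.Analysis"
begin

text \<open>A 3x3 matrix M :: real^3^3 has entry M_ij = M$i$j.
 Its column-stacking vectorisation vec(M) is indexed by pairs (i,j) :: 3 \<times> 3,
 where the pair (i,j) stands for position (j-1)*3+i of the usual vec(M) in R^9.
 A vector of R^12 = [vec(.); t] is indexed by the sum type (3 \<times> 3) + 3,
 Inl p being the first nine coordinates and Inr k the last three.\<close>

definition vecM :: "real^'n^'m \<Rightarrow> real^('m \<times> 'n)" where
  "vecM M = (\<chi> ij. M $ fst ij $ snd ij)"

text \<open>Kronecker product, indexed compatibly with vecM: the pair (b,a) stands for row
 (a-1)*p+b and the pair (d,c) for column (c-1)*q+d, so that entry
 (A \<otimes> B)_{(a-1)p+b,(c-1)q+d} = A_ac B_bd.\<close>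
definition kron :: "real^'n^'m \<Rightarrow> real^'q^'p \<Rightarrow> real^('q \<times> 'n)^('p \<times> 'm)" where
  "kron A B = (\<chi> ba dc. A $ snd ba $ snd dc * B $ fst ba $ fst dc)"

definition sym_mat :: "real^'n^'n \<Rightarrow> bool" where
  "sym_mat H \<longleftrightarrow> transpose H = H"

definition pos_def :: "real^'n^'n \<Rightarrow> bool" where
  "pos_def H \<longleftrightarrow> sym_mat H \<and> (\<forall>x. x \<noteq> 0 \<longrightarrow> x \<bullet> (H *v x) > 0)"

definition SO3 :: "(real^3^3) set" where
  "SO3 = {R. orthogonal_matrix R \<and> det R = 1}"

definition hat :: "real^3 \<Rightarrow> real^3^3" where
  "hat w = vector [vector [0, - w$3, w$2],
                   vector [w$3, 0, - w$1],
                   vector [- w$2, w$1, 0]]"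

definition rodrigues :: "real^3 \<Rightarrow> real \<Rightarrow> real^3^3" where
  "rodrigues w \<theta> = mat 1 + sin \<theta> *\<^sub>R hat w + (1 - cos \<theta>) *\<^sub>R (hat w ** hat w)"

definition Pr :: "real^((3 \<times> 3) + 3)^(3 \<times> 3)" where
  "Pr = (\<chi> p q. if q = Inl p then 1 else 0)"

definition Ptheta :: "real^(3 \<times> 3)^3" where
  "Ptheta = vector [
     (\<chi> q. if q = (3,2) then 1 else if q = (2,3) then -1 else 0),
     (\<chi> q. if q = (1,3) then 1 else if q = (3,1) then -1 else 0),
     (\<chi> q. if q = (2,1) then 1 else if q = (1,2) then -1 else 0)]"

definition stack :: "real^(3 \<times> 3) \<Rightarrow> real^3 \<Rightarrow> real^((3 \<times> 3) + 3)" where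
  "stack v t = (\<chi> i. case i of Inl p \<Rightarrow> v $ p | Inr k \<Rightarrow> t $ k)"

definition Hr :: "real^((3 \<times> 3) + 3)^((3 \<times> 3) + 3) \<Rightarrow> real^(3 \<times> 3)^(3 \<times> 3)" where
  "Hr H = matrix_inv (Pr ** matrix_inv H ** transpose Pr)"

definition Htheta :: "real^((3 \<times> 3) + 3)^((3 \<times> 3) + 3) \<Rightarrow> real^3^3 \<Rightarrow> real^3^3" where
  "Htheta H Rb = (let K = kron (transpose Rb) (mat 1 :: real^3^3) in
     4 *\<^sub>R matrix_inv (Ptheta ** matrix_inv (transpose K ** Hr H ** K) ** transpose Ptheta))"

end

theory Submission
  imports Defs
begin

(* For a positive definite G and a matrix P with injective transpose,
   (P u)^T (P G^-1 P^T)^-1 (P u) <= u^T G u: the left side is u^T G u minimised over all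
   vectors with the same image under P. Projecting the 12-dimensional ellipsoid with P_r
   discards the translation. Since R - Rb = (R_w(theta) - I) Rb, vec(R - Rb) is the image of
   u = vec(R_w(theta) - I) under the invertible Rb^T kron I, and projecting once more with
   P_theta keeps only the skew part of R_w(theta) - I, which is 2 sin(theta) w because the
   hat(w)^2 term of Rodrigues' formula is symmetric. The factor 4 in H_theta absorbs the 2. *)

lemma matrix_inv_right:
  fixes A :: "'a::semiring_1^'n^'n"
  assumes "invertible A"
  shows "A ** matrix_inv A = mat 1"
proof -
  have "\<exists>A'. A ** A' = mat 1 \<and> A' ** A = mat 1"
    using assms unfolding invertible_def .
  then have "A ** matrix_inv A = mat 1 \<and> matrix_inv A ** A = mat 1"
    unfolding matrix_inv_def by (rule someI_ex)
  then show ?thesis ..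
qed

lemma matrix_mul_diff_rdistrib: "(A - B) ** C = A ** C - B ** (C :: 'a::ring_1^'p^'n)"
  by (simp add: matrix_matrix_mult_def vec_eq_iff sum_subtractf algebra_simps)

lemma inner_matrix_vector_transpose:
  "(A *v x) \<bullet> (y::real^'m) = x \<bullet> (transpose A *v y)"
  by (metis dot_lmul_matrix inner_commute transpose_matrix_vector)

lemma quadratic_form_congruence:
  fixes A :: "real^'n^'n" and K :: "real^'m^'n"
  shows "x \<bullet> ((transpose K ** A ** K) *v x) = (K *v x) \<bullet> (A *v (K *v x))"
  by (simp add: inner_matrix_vector_transpose matrix_vector_mul_assoc[symmetric])

lemma pos_def_symmetric: "pos_def H \<Longrightarrow> transpose H = H"
  unfolding pos_def_def sym_mat_def by blast

lemma pos_def_nonneg: "pos_def H \<Longrightarrow> 0 \<le> x \<bullet> (H *v x)"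
  unfolding pos_def_def by (cases "x = 0") (auto intro: less_imp_le)

lemma pos_def_invertible:
  fixes H :: "real^'n^'n"
  assumes "pos_def H"
  shows "invertible H"
proof -
  have "\<forall>x. H *v x = 0 \<longrightarrow> x = 0"
    using assms unfolding pos_def_def by (metis inner_zero_right less_irrefl)
  then show ?thesis
    using invertible_left_inverse matrix_left_invertible_ker by blast
qed

lemma pos_def_matrix_inv:
  fixes H :: "real^'n^'n"
  assumes "pos_def H"
  shows "pos_def (matrix_inv H)"
  unfolding pos_def_def sym_mat_def
proof (intro conjI allI impI)
  have H_inv: "H ** matrix_inv H = mat 1"
    using assms pos_def_invertible matrix_inv_right by blast
  then have "transpose (matrix_inv H) ** H = mat 1"
    by (metis matrix_transpose_mul pos_def_symmetric[OF assms] transpose_mat)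
  then show "transpose (matrix_inv H) = matrix_inv H"
    by (metis H_inv matrix_mul_assoc matrix_mul_lid matrix_mul_rid)
  fix x :: "real^'n"
  assume "x \<noteq> 0"
  define y where "y = matrix_inv H *v x"
  have x: "x = H *v y"
    unfolding y_def by (simp add: H_inv matrix_vector_mul_assoc)
  with \<open>x \<noteq> 0\<close> have "y \<noteq> 0"
    by auto
  then have "y \<bullet> (H *v y) > 0"
    using assms unfolding pos_def_def by blast
  then show "x \<bullet> (matrix_inv H *v x) > 0"
    using x y_def by (metis inner_commute)
qed

lemma pos_def_congruence:
  fixes A :: "real^'n^'n" and P :: "real^'n^'m"
  assumes "pos_def A" and "inj ((*v) (transpose P))"
  shows "pos_def (P ** A ** transpose P)"
  unfolding pos_def_def sym_mat_def
proof (intro conjI allI impI)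
  show "transpose (P ** A ** transpose P) = P ** A ** transpose P"
    by (simp add: matrix_transpose_mul pos_def_symmetric[OF assms(1)] matrix_mul_assoc)
  fix z :: "real^'m"
  assume "z \<noteq> 0"
  then have "transpose P *v z \<noteq> 0"
    using assms(2) by (metis injD matrix_vector_mult_0_right)
  then show "z \<bullet> ((P ** A ** transpose P) *v z) > 0"
    using assms(1) quadratic_form_congruence[where x=z and K="transpose P"]
    unfolding pos_def_def by simp
qed

lemma pos_def_marginal:
  fixes G :: "real^'n^'n" and P :: "real^'n^'m"
  assumes "pos_def G" and "inj ((*v) (transpose P))"
  shows "pos_def (matrix_inv (P ** matrix_inv G ** transpose P))"
  using assms by (intro pos_def_matrix_inv pos_def_congruence)

lemma marginal_quadratic_form_le:
  fixes G :: "real^'n^'n" and P :: "real^'n^'m"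
  assumes G: "pos_def G" and P: "inj ((*v) (transpose P))"
  shows "(P *v u) \<bullet> (matrix_inv (P ** matrix_inv G ** transpose P) *v (P *v u)) \<le> u \<bullet> (G *v u)"
proof -
  define S where "S = P ** matrix_inv G ** transpose P"
  define z where "z = matrix_inv S *v (P *v u)"
  \<comment> \<open>w is the G-orthogonal projection of u onto the range of G^-1 P^T, so that
    u^T G u = w^T G w + (u - w)^T G (u - w), and w^T G w is the left-hand side\<close>
  define w where "w = matrix_inv G *v (transpose P *v z)"
  define q where "q = (P *v u) \<bullet> z"
  have S_inv: "S ** matrix_inv S = mat 1"
    unfolding S_def using G P pos_def_congruence pos_def_matrix_inv pos_def_invertible matrix_inv_right
    by blast
  have G_inv: "G ** matrix_inv G = mat 1"
    using G pos_def_invertible matrix_inv_right by blast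
  have Gw: "G *v w = transpose P *v z"
    unfolding w_def by (simp add: matrix_vector_mul_assoc G_inv)
  have Pw: "P *v w = P *v u"
    unfolding w_def z_def by (simp add: matrix_vector_mul_assoc matrix_mul_assoc S_inv flip: S_def)
  have uGw: "u \<bullet> (G *v w) = q"
    unfolding q_def Gw by (simp add: inner_matrix_vector_transpose)
  have wGw: "w \<bullet> (G *v w) = q"
    unfolding q_def Gw by (metis Pw inner_matrix_vector_transpose inner_commute transpose_transpose)
  have wGu: "w \<bullet> (G *v u) = q"
    using uGw pos_def_symmetric[OF G] by (metis inner_matrix_vector_transpose inner_commute)
  have "0 \<le> (u - w) \<bullet> (G *v (u - w))"
    using G pos_def_nonneg by blast
  also have "\<dots> = u \<bullet> (G *v u) - q"
    by (simp add: matrix_vector_mult_diff_distrib inner_diff_left inner_diff_right uGw wGw wGu)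
  finally show ?thesis
    unfolding q_def z_def S_def by simp
qed

lemma vecM_add: "vecM (A + B) = vecM A + vecM B"
  by (simp add: vecM_def vec_eq_iff)

lemma vecM_scaleR: "vecM (c *\<^sub>R A) = c *\<^sub>R vecM A"
  by (simp add: vecM_def vec_eq_iff)

lemma vecM_unvec: "vecM (\<chi> i j. u $ (i, j)) = u"
  by (simp add: vecM_def vec_eq_iff)

lemma inj_vecM: "inj vecM"
  by (rule injI) (simp add: vecM_def vec_eq_iff)

lemma sum_delta_fst:
  fixes g :: "'m::finite \<times> 'n::finite \<Rightarrow> real"
  shows "(\<Sum>dc\<in>UNIV. (if b = fst dc then 1 else 0) * g dc) = (\<Sum>c\<in>UNIV. g (b, c))"
proof -
  have "(\<Sum>dc\<in>UNIV. (if b = fst dc then 1 else 0) * g dc)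
      = (\<Sum>d\<in>UNIV. \<Sum>c\<in>UNIV. (if b = d then 1 else 0) * g (d, c))"
    unfolding UNIV_Times_UNIV[symmetric] sum.cartesian_product
    by (intro sum.cong) (auto simp: case_prod_beta)
  also have "\<dots> = (\<Sum>d\<in>UNIV. if b = d then (\<Sum>c\<in>UNIV. g (d, c)) else 0)"
    by (intro sum.cong) auto
  also have "\<dots> = (\<Sum>c\<in>UNIV. g (b, c))"
    by (simp add: sum.delta')
  finally show ?thesis .
qed

lemma vecM_matrix_mul:
  "vecM (M ** B) = kron (transpose B) (mat 1 :: real^'m^'m) *v vecM (M :: real^'n^'m)"
proof -
  have "(kron (transpose B) (mat 1 :: real^'m^'m) *v vecM M) $ (b, a)
      = (\<Sum>dc\<in>UNIV. (if b = fst dc then 1 else 0) * (B $ snd dc $ a * M $ fst dc $ snd dc))"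
    for b a
    unfolding matrix_vector_mult_def kron_def transpose_def mat_def vecM_def
    by (simp only: vec_lambda_beta) (intro sum.cong, auto)
  then show ?thesis
    by (simp add: vec_eq_iff sum_delta_fst vecM_def matrix_matrix_mult_def mult.commute)
qed

lemma inj_kron_transpose_mat1:
  fixes B :: "real^'n^'n"
  assumes "invertible B"
  shows "inj ((*v) (kron (transpose B) (mat 1 :: real^'m^'m)))"
proof (rule injI)
  fix u v :: "real^('m \<times> 'n)"
  define M N :: "real^'n^'m" where "M = (\<chi> i j. u $ (i, j))" and "N = (\<chi> i j. v $ (i, j))"
  assume "kron (transpose B) (mat 1) *v u = kron (transpose B) (mat 1) *v v"
  then have "vecM (M ** B) = vecM (N ** B)"
    unfolding vecM_matrix_mul M_def N_def vecM_unvec .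
  then have "M ** B = N ** B"
    by (rule injD[OF inj_vecM])
  then have "M ** B ** matrix_inv B = N ** B ** matrix_inv B"
    by simp
  then have "M = N"
    by (simp add: matrix_mul_assoc[symmetric] matrix_inv_right[OF assms])
  then show "u = v"
    using vecM_unvec M_def N_def by metis
qed

lemma Pr_stack: "Pr *v stack v t = v"
  by (simp add: vec_eq_iff matrix_vector_mult_def Pr_def stack_def mult_if_delta sum.delta)

lemma inj_transpose_Pr: "inj ((*v) (transpose Pr))"
proof -
  have "(transpose Pr *v z) $ Inl p = z $ p" for z :: "real^(3 \<times> 3)" and p
    by (simp add: matrix_vector_mult_def transpose_def Pr_def mult_if_delta sum.delta')
  then have "transpose Pr *v z = transpose Pr *v z' \<Longrightarrow> z = z'" for z z'
    by (metis vec_eq_iff)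
  then show ?thesis
    by (rule injI)
qed

lemma sum_plus_minus_delta:
  fixes f :: "'a::finite \<Rightarrow> real"
  assumes "a \<noteq> b"
  shows "(\<Sum>q\<in>UNIV. (if q = a then 1 else if q = b then -1 else 0) * f q) = f a - f b"
proof -
  have "(\<Sum>q\<in>UNIV. (if q = a then 1 else if q = b then -1 else 0) * f q)
      = (\<Sum>q\<in>UNIV. (if q = a then f q else 0) - (if q = b then f q else 0))"
    using assms by (intro sum.cong) auto
  then show ?thesis
    by (simp add: sum_subtractf sum.delta)
qed

lemma Ptheta_vecM:
  "Ptheta *v vecM M = vector [M$3$2 - M$2$3, M$1$3 - M$3$1, M$2$1 - M$1$2]"
  by (simp add: vec_eq_iff forall_3 Ptheta_def matrix_vector_mult_def vecM_def sum_plus_minus_delta)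

lemma inj_transpose_Ptheta: "inj ((*v) (transpose Ptheta))"
proof -
  have "(transpose Ptheta *v z) $ (3, 2) = z $ 1"
    and "(transpose Ptheta *v z) $ (1, 3) = z $ 2"
    and "(transpose Ptheta *v z) $ (2, 1) = z $ 3" for z :: "real^3"
    by (simp_all add: Ptheta_def transpose_def matrix_vector_mult_def sum_3)
  then have "transpose Ptheta *v z = transpose Ptheta *v z' \<Longrightarrow> z = z'" for z z'
    by (simp add: vec_eq_iff forall_3)
  then show ?thesis
    by (rule injI)
qed

lemma Ptheta_vecM_symmetric:
  assumes "transpose M = M"
  shows "Ptheta *v vecM M = 0"
proof -
  have "M $ i $ j = M $ j $ i" for i j
    using arg_cong[OF assms, of "\<lambda>A. A $ j $ i"] by (simp add: transpose_def)
  from this[of 3 2] this[of 1 3] this[of 2 1] show ?thesis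
    by (simp add: Ptheta_vecM vec_eq_iff forall_3)
qed

lemma hat_entries:
  "hat w $ 1 $ 1 = 0" "hat w $ 1 $ 2 = - w$3" "hat w $ 1 $ 3 = w$2"
  "hat w $ 2 $ 1 = w$3" "hat w $ 2 $ 2 = 0" "hat w $ 2 $ 3 = - w$1"
  "hat w $ 3 $ 1 = - w$2" "hat w $ 3 $ 2 = w$1" "hat w $ 3 $ 3 = 0"
  by (simp_all add: hat_def)

lemma transpose_hat: "transpose (hat w) = - hat w"
  by (simp add: vec_eq_iff forall_3 transpose_def hat_entries)

lemma Ptheta_vecM_hat: "Ptheta *v vecM (hat w) = 2 *\<^sub>R w"
  by (simp add: Ptheta_vecM hat_entries vec_eq_iff forall_3)

lemma transpose_hat_squared: "transpose (hat w ** hat w) = hat w ** hat w"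
proof -
  have "(- hat w) ** (- hat w) = hat w ** hat w"
    by (simp add: matrix_matrix_mult_def)
  then show ?thesis
    by (simp add: matrix_transpose_mul transpose_hat)
qed

lemma Ptheta_vecM_rodrigues: "Ptheta *v vecM (rodrigues w \<theta> - mat 1) = (2 * sin \<theta>) *\<^sub>R w"
proof -
  have "rodrigues w \<theta> - mat 1 = sin \<theta> *\<^sub>R hat w + (1 - cos \<theta>) *\<^sub>R (hat w ** hat w)"
    by (simp add: rodrigues_def)
  then show ?thesis
    by (simp add: vecM_add vecM_scaleR matrix_vector_right_distrib matrix_vector_mult_scaleR
        Ptheta_vecM_hat Ptheta_vecM_symmetric transpose_hat_squared)
qed

theorem proposition6:
  fixes H :: "real^((3 \<times> 3) + 3)^((3 \<times> 3) + 3)"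
    and Rb R :: "real^3^3" and tb t \<omega> :: "real^3" and \<theta> :: real
  assumes "pos_def H"
    and "Rb \<in> SO3" and "R \<in> SO3"
    and "stack (vecM (R - Rb)) (t - tb) \<bullet> (H *v stack (vecM (R - Rb)) (t - tb)) \<le> 1"
    and "norm \<omega> = 1" and "0 \<le> \<theta>"
    and "R = rodrigues \<omega> \<theta> ** Rb"
    and "\<theta> \<le> pi / 2"
  shows "(sin \<theta> *\<^sub>R \<omega>) \<bullet> (Htheta H Rb *v (sin \<theta> *\<^sub>R \<omega>)) \<le> 1
    \<and> sin \<theta> = norm (sin \<theta> *\<^sub>R \<omega>)
    \<and> (0 < \<theta> \<longrightarrow> \<omega> = (1 / norm (sin \<theta> *\<^sub>R \<omega>)) *\<^sub>R (sin \<theta> *\<^sub>R \<omega>))"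
proof -
  define K where "K = kron (transpose Rb) (mat 1 :: real^3^3)"
  define G where "G = transpose K ** Hr H ** K"
  define u where "u = vecM (rodrigues \<omega> \<theta> - mat 1)"
  define v where "v = vecM (R - Rb)"
  have "invertible Rb"
    using assms(2) unfolding SO3_def orthogonal_matrix_def invertible_def by blast
  then have G: "pos_def G"
    unfolding G_def K_def
    using pos_def_congruence[OF pos_def_marginal[OF assms(1) inj_transpose_Pr]] inj_kron_transpose_mat1
    by (metis Hr_def transpose_transpose)
  have "R - Rb = (rodrigues \<omega> \<theta> - mat 1) ** Rb"
    by (simp add: assms(7) matrix_mul_diff_rdistrib)
  then have v: "v = K *v u"
    unfolding v_def u_def K_def by (simp add: vecM_matrix_mul)
  have "Htheta H Rb = 4 *\<^sub>R matrix_inv (Ptheta ** matrix_inv G ** transpose Ptheta)"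
    unfolding Htheta_def G_def K_def Let_def ..
  then have "(sin \<theta> *\<^sub>R \<omega>) \<bullet> (Htheta H Rb *v (sin \<theta> *\<^sub>R \<omega>))
      = (Ptheta *v u) \<bullet> (matrix_inv (Ptheta ** matrix_inv G ** transpose Ptheta) *v (Ptheta *v u))"
    by (simp add: u_def Ptheta_vecM_rodrigues scaleR_matrix_vector_assoc[symmetric] matrix_vector_mult_scaleR)
  also have "\<dots> \<le> u \<bullet> (G *v u)"
    using G inj_transpose_Ptheta by (rule marginal_quadratic_form_le)
  also have "\<dots> = v \<bullet> (Hr H *v v)"
    unfolding G_def v by (rule quadratic_form_congruence)
  also have "\<dots> \<le> stack v (t - tb) \<bullet> (H *v stack v (t - tb))"
    using marginal_quadratic_form_le[OF assms(1) inj_transpose_Pr] by (metis Hr_def Pr_stack)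
  also have "\<dots> \<le> 1"
    using assms(4) unfolding v_def .
  finally have "(sin \<theta> *\<^sub>R \<omega>) \<bullet> (Htheta H Rb *v (sin \<theta> *\<^sub>R \<omega>)) \<le> 1" .
  moreover have "0 \<le> sin \<theta>" and "0 < \<theta> \<Longrightarrow> 0 < sin \<theta>"
    using assms(6,8) by (auto intro: sin_ge_zero sin_gt_zero)
  ultimately show ?thesis
    using assms(5) by auto
qed

end
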